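(* Let $x_1\ge x_2\ge\cdots\ge x_n\ge 0$ be integers and suppose there is a set $S\subseteq[n]$ of size $q$ such that $x_i=0$ for all $i\in S$. Increase $x_i$ by $1$ for every $i\in S$. Then $\Phi=\sum_{i=1}^n x_i^2$ increases by exactly $q$, and $\Psi = n\sum_i|x_i|+\sum_{i<j}|x_i-x_j|$ increases by at least $q^2$. *)

theory Defs
  imports Main
begin

definition Phi :: "nat \<Rightarrow> (nat \<Rightarrow> int) \<Rightarrow> int" where
  "Phi n x = (\<Sum>i\<in>{1..n}. (x i)^2)"

definition Psi :: "nat \<Rightarrow> (nat \<Rightarrow> int) \<Rightarrow> int" where
  "Psi n x = int n * (\<Sum>i\<in>{1..n}. \<bar>x i\<bar>)
     + (\<Sum>(i,j)\<in>{(i,j). i \<in> {1..n} \<and> j \<in> {1..n} \<and> i < j}. \<bar>x i - x j\<bar>)"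

end

theory Submission
  imports Defs
begin

text \<open>Raising the zero entries indexed by \<open>S\<close> to \<open>1\<close> adds exactly \<open>q\<close> to \<open>\<Phi>\<close> and \<open>n q\<close> to the
  first term of \<open>\<Psi>\<close>. In the pairwise term only the \<open>q (n - q)\<close> pairs with exactly one index
  in \<open>S\<close> change, each by \<open>\<plusminus>1\<close>, because the other entry is a nonnegative integer. Hence
  \<open>\<Psi>\<close> grows by at least \<open>n q - q (n - q) = q\<^sup>2\<close>.\<close>

definition bump :: "'a set \<Rightarrow> ('a \<Rightarrow> int) \<Rightarrow> 'a \<Rightarrow> int" where
  "bump S x = (\<lambda>i. if i \<in> S then x i + 1 else x i)"

definition increasing_pairs :: "'a::linorder set \<Rightarrow> ('a \<times> 'a) set" where
  "increasing_pairs A = {(i, j). i \<in> A \<and> j \<in> A \<and> i < j}"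

lemma finite_increasing_pairs: "finite A \<Longrightarrow> finite (increasing_pairs A)"
  unfolding increasing_pairs_def
  by (rule finite_subset[of _ "A \<times> A"]) auto

lemma sum_bump_zeros:
  assumes "finite A" "S \<subseteq> A" "\<And>i. i \<in> S \<Longrightarrow> x i = 0"
  shows "(\<Sum>i\<in>A. f (bump S x i)) = (\<Sum>i\<in>A. f (x i)) + int (card S) * (f 1 - f 0)"
proof -
  have "(\<Sum>i\<in>A. f (bump S x i)) = (\<Sum>i\<in>A. f (x i) + (if i \<in> S then f 1 - f 0 else 0))"
    using assms(3) by (intro sum.cong) (auto simp: bump_def)
  also have "\<dots> = (\<Sum>i\<in>A. f (x i)) + (\<Sum>i\<in>A \<inter> S. f 1 - f 0)"
    using assms(1) by (simp add: sum.distrib sum.If_cases)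
  also have "A \<inter> S = S"
    using assms(2) by blast
  finally show ?thesis
    by simp
qed

lemma card_pairs_separated_le:
  fixes A S :: "'a::linorder set"
  assumes "finite A" "S \<subseteq> A"
  shows "card {(i, j) \<in> increasing_pairs A. (i \<in> S) \<noteq> (j \<in> S)} \<le> card S * card (A - S)"
proof -
  let ?E = "{(i, j) \<in> increasing_pairs A. (i \<in> S) \<noteq> (j \<in> S)}"
  define g where "g = (\<lambda>(i, j). if i \<in> S then (i, j) else (j, i))"
  have "inj_on g ?E" "g ` ?E \<subseteq> S \<times> (A - S)"
    unfolding inj_on_def g_def increasing_pairs_def by auto
  then have "card ?E \<le> card (S \<times> (A - S))"
    using assms by (intro card_inj_on_le) (auto intro: finite_subset)
  then show ?thesis
    by (simp add: card_cartesian_product)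
qed

lemma abs_diff_bump_ge:
  assumes "i \<in> S \<Longrightarrow> x i = 0" "j \<in> S \<Longrightarrow> x j = 0" "x i \<ge> 0" "x j \<ge> 0"
  shows "\<bar>bump S x i - bump S x j\<bar> \<ge> \<bar>x i - x j\<bar> - (if (i \<in> S) \<noteq> (j \<in> S) then 1 else 0)"
  using assms by (auto simp: bump_def)

lemma sum_pairs_bump_ge:
  fixes A S :: "'a::linorder set"
  assumes "finite A" "S \<subseteq> A" "\<And>i. i \<in> S \<Longrightarrow> x i = 0" "\<And>i. i \<in> A \<Longrightarrow> x i \<ge> 0"
  shows "(\<Sum>(i, j)\<in>increasing_pairs A. \<bar>bump S x i - bump S x j\<bar>)
           \<ge> (\<Sum>(i, j)\<in>increasing_pairs A. \<bar>x i - x j\<bar>) - int (card S * card (A - S))"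
proof -
  let ?P = "increasing_pairs A"
  let ?E = "{(i, j) \<in> ?P. (i \<in> S) \<noteq> (j \<in> S)}"
  have fin: "finite ?P"
    using assms(1) by (rule finite_increasing_pairs)
  have "(\<Sum>(i, j)\<in>?P. \<bar>x i - x j\<bar>) - int (card ?E)
          = (\<Sum>(i, j)\<in>?P. \<bar>x i - x j\<bar> - (if (i \<in> S) \<noteq> (j \<in> S) then 1 else 0))"
    using fin by (simp add: sum_subtractf sum.If_cases case_prod_beta' Int_def)
  also have "\<dots> \<le> (\<Sum>(i, j)\<in>?P. \<bar>bump S x i - bump S x j\<bar>)"
  proof (rule sum_mono, clarify)
    fix i j
    assume "(i, j) \<in> ?P"
    then have "x i \<ge> 0" "x j \<ge> 0"
      using assms(4) by (auto simp: increasing_pairs_def)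
    then show "\<bar>x i - x j\<bar> - (if (i \<in> S) \<noteq> (j \<in> S) then 1 else 0) \<le> \<bar>bump S x i - bump S x j\<bar>"
      using assms(3) by (intro abs_diff_bump_ge[where S = S and x = x])
  qed
  finally show ?thesis
    using card_pairs_separated_le[OF assms(1,2)] by linarith
qed

lemma Psi_eq_increasing_pairs:
  "Psi n x = int n * (\<Sum>i\<in>{1..n}. \<bar>x i\<bar>) + (\<Sum>(i, j)\<in>increasing_pairs {1..n}. \<bar>x i - x j\<bar>)"
  unfolding Psi_def increasing_pairs_def by simp

lemma Phi_bump_zeros:
  assumes "S \<subseteq> {1..n}" "\<And>i. i \<in> S \<Longrightarrow> x i = 0"
  shows "Phi n (bump S x) = Phi n x + int (card S)"
  unfolding Phi_def using sum_bump_zeros[OF _ assms, where f = power2] by simp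

lemma Psi_bump_zeros_ge:
  assumes "S \<subseteq> {1..n}" "\<And>i. i \<in> S \<Longrightarrow> x i = 0" "\<And>i. i \<in> {1..n} \<Longrightarrow> x i \<ge> 0"
  shows "Psi n (bump S x) \<ge> Psi n x + int (card S) ^ 2"
proof -
  have "card ({1..n} - S) = n - card S" "card S \<le> n"
    using assms(1) card_mono[OF _ assms(1)] by (auto simp: card_Diff_subset finite_subset)
  moreover have "(\<Sum>i\<in>{1..n}. \<bar>bump S x i\<bar>) = (\<Sum>i\<in>{1..n}. \<bar>x i\<bar>) + int (card S)"
    using sum_bump_zeros[OF _ assms(1,2), where f = abs] by simp
  ultimately show ?thesis
    using sum_pairs_bump_ge[OF _ assms] unfolding Psi_eq_increasing_pairs
    by (simp add: of_nat_diff algebra_simps power2_eq_square)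
qed

theorem proposition6p3:
  fixes n q :: nat and x :: "nat \<Rightarrow> int" and S :: "nat set"
  assumes sorted: "\<And>i j. 1 \<le> i \<Longrightarrow> i \<le> j \<Longrightarrow> j \<le> n \<Longrightarrow> x i \<ge> x j"
    and nonneg: "\<And>i. 1 \<le> i \<Longrightarrow> i \<le> n \<Longrightarrow> x i \<ge> 0"
    and S_sub: "S \<subseteq> {1..n}"
    and S_card: "card S = q"
    and S_zero: "\<And>i. i \<in> S \<Longrightarrow> x i = 0"
  defines "y \<equiv> (\<lambda>i. if i \<in> S then x i + 1 else x i)"
  shows "Phi n y = Phi n x + int q \<and> Psi n y \<ge> Psi n x + (int q)^2"
proof -
  have "y = bump S x"
    unfolding y_def bump_def ..
  moreover have "\<And>i. i \<in> {1..n} \<Longrightarrow> x i \<ge> 0"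
    using nonneg by simp
  ultimately show ?thesis
    using Phi_bump_zeros[OF S_sub S_zero] Psi_bump_zeros_ge[OF S_sub S_zero] S_card by simp
qed

end
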